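(* For the tree $\widetilde T$ constructed below there is a constant $C>0$ such that $|\widetilde T_n|\le 3^{C\sqrt n}$ for all $n\ge1$.
   Context: For a rooted tree, $T_n$ denotes the set of edges $e=(e^-,e^+)$ with $e^+$ at distance $n$ from the root. To a nonempty set $E\subset\{0,1,2\}^{\mathbb N}$ associate the rooted tree $\Phi(E)$ whose vertices are all finite words (including the empty word, the root) that are prefixes of some element of $E$, with edges between each such word $w$ and each such word $wj$, $j\in\{0,1,2\}$. The shift is $\mathcal S(a_1,a_2,\dots)=(a_2,a_3,\dots)$. The labelled $1$-$3$ tree $T_{1,3}$: vertices are finite words over $\{0,1,2\}$; the root $\emptyset$ has children $0,1$; a vertex $w$ with $k$ children has children $w0,\dots,w(k-1)$; for each $n\ge1$, ordering the $2^n$ level-$n$ vertices lexicographically, the first $2^{n-1}$ have one child and the last $2^{n-1}$ have three children. Let $R$ be the set of sequences all of whose prefixes are vertices of $T_{1,3}$, $E_0$ the set of sequences $(a_1,a_2,0,a_3,0,0,a_4,0,0,0,a_5,\dots)$ (each $a_k$ followed by $k-1$ zeros) for $(a_k)\in R$, $E_j=\mathcal S(E_{j-1})$, $\widetilde E=\bigcup_{j\ge0}E_j$, and $\widetilde T=\Phi(\widetilde E)$. *)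

theory Defs
  imports Complex_Main
begin

(* Finite words over {0,1,2} are nat lists; infinite sequences are nat => nat,
   indexed from 0 (so a_1 is s 0). *)

definition lex_less :: "nat list \<Rightarrow> nat list \<Rightarrow> bool" where
  "lex_less v w \<longleftrightarrow> (v, w) \<in> lexord {(a, b). a < b}"

definition nchildren13 :: "nat \<Rightarrow> nat list set \<Rightarrow> nat list \<Rightarrow> nat" where
  "nchildren13 n V w = (if card {v \<in> V. lex_less v w} < 2 ^ (n - 1) then 1 else 3)"

fun T13_level :: "nat \<Rightarrow> nat list set" where
  "T13_level 0 = {[]}"
| "T13_level (Suc n) =
     (if n = 0 then {[0], [1]}
      else {w @ [j] | w j. w \<in> T13_level n \<and> j < nchildren13 n (T13_level n) w})"

definition T13_vertices :: "nat list set" where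
  "T13_vertices = (\<Union>n. T13_level n)"

definition prefix_seq :: "(nat \<Rightarrow> nat) \<Rightarrow> nat \<Rightarrow> nat list" where
  "prefix_seq s n = map s [0..<n]"

definition R13 :: "(nat \<Rightarrow> nat) set" where
  "R13 = {s. \<forall>n. prefix_seq s n \<in> T13_vertices}"

(* E_0: a_k (1-indexed) followed by k-1 zeros; with 0-indexing, a k sits at position k(k+1)/2 *)
definition E0 :: "(nat \<Rightarrow> nat) set" where
  "E0 = {t. \<exists>a \<in> R13. (\<forall>k. t (k * (k + 1) div 2) = a k) \<and>
                        (\<forall>p. (\<nexists>k. p = k * (k + 1) div 2) \<longrightarrow> t p = 0)}"

definition shift :: "(nat \<Rightarrow> nat) \<Rightarrow> (nat \<Rightarrow> nat)" where
  "shift s = (\<lambda>n. s (Suc n))"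

definition Ej :: "nat \<Rightarrow> (nat \<Rightarrow> nat) set" where
  "Ej j = (shift ^^ j) ` E0"

definition Etilde :: "(nat \<Rightarrow> nat) set" where
  "Etilde = (\<Union>j. Ej j)"

definition Phi_vertices :: "(nat \<Rightarrow> nat) set \<Rightarrow> nat list set" where
  "Phi_vertices E = {prefix_seq s n | s n. s \<in> E}"

definition Phi_edges :: "(nat \<Rightarrow> nat) set \<Rightarrow> (nat list \<times> nat list) set" where
  "Phi_edges E = {(w, w @ [j]) | w j. w \<in> Phi_vertices E \<and> w @ [j] \<in> Phi_vertices E \<and> j \<in> {0,1,2}}"

(* T_n for Phi(E): edges e = (e-, e+) with e+ at distance n from the root [];
   in Phi(E) the distance of a word from the root is its length *)
definition Phi_level_edges :: "(nat \<Rightarrow> nat) set \<Rightarrow> nat \<Rightarrow> (nat list \<times> nat list) set" where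
  "Phi_level_edges E n = {e \<in> Phi_edges E. length (snd e) = n}"

end

(* An edge of level n is determined by its endpoint, a word of length n of the form
   t_j ... t_(j+n-1) with t in E_0.  Such a t takes values in {0,1,2} (the only way the
   structure of T_{1,3} enters) and vanishes off the triangular positions k(k+1)/2.
   The triangular numbers with indices k0 and k0 + m differ by at least m^2/2, so a window
   of length n meets O(sqrt n) of them, giving 3^O(sqrt n) words for each offset
   j < n(n+1)/2.  Beyond n(n+1)/2 consecutive triangular numbers are more than n apart, so
   every window has at most one nonzero letter, giving at most 3n + 1 further words.
   Altogether |T_n| <= n^2 3^O(sqrt n) + 3n + 1 <= 3^(C sqrt n). *)

theory Submission
  imports Defs "HOL-Library.FuncSet"
begin

definition tri :: "nat \<Rightarrow> nat" where
  "tri k = k * (k + 1) div 2"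

lemma tri_add: "tri (k + d) = tri k + tri d + k * d"
proof -
  have "(k + d) * (k + d + 1) = k * (k + 1) + d * (d + 1) + 2 * (k * d)"
    by (simp add: algebra_simps)
  moreover have "even (k * (k + 1))" "even (d * (d + 1))" by auto
  ultimately show ?thesis unfolding tri_def by fastforce
qed

lemma tri_Suc: "tri (Suc k) = tri k + Suc k"
  using tri_add[of k 1] by (simp add: tri_def)

lemma tri_mono: "k \<le> k' \<Longrightarrow> tri k \<le> tri k'"
  using tri_add[of k "k' - k"] by simp

lemma tri_strict_mono: "k < k' \<Longrightarrow> tri k + k < tri k'"
  using tri_Suc[of k] tri_mono[of "Suc k" k'] by simp

lemma le_tri: "k \<le> tri k"
  by (induction k) (auto simp: tri_Suc)

lemma two_tri: "2 * tri k = k * (k + 1)"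
  unfolding tri_def by simp

lemma sq_le_two_tri: "k * k \<le> 2 * tri k"
  by (simp add: two_tri)

lemma tri_le_sq: "tri k \<le> k * k"
proof -
  have "2 * tri k = k * k + k" using two_tri[of k] by (simp add: algebra_simps)
  then show ?thesis using le_square[of k] by linarith
qed

lemma card_tri_window_le:
  assumes "2 * n \<le> m * m"
  shows "card (range tri \<inter> {j..<j + n}) \<le> m"
proof -
  define K where "K = {k. tri k \<in> {j..<j + n}}"
  have "range tri \<inter> {j..<j + n} = tri ` K" unfolding K_def by auto
  have "finite K"
    by (rule finite_subset[of _ "{..<j + n}"]) (auto simp: K_def intro: le_less_trans[OF le_tri])
  show ?thesis
  proof (cases "K = {}")
    case False
    define k0 where "k0 = Min K"
    have "K \<subseteq> {k0..<k0 + m}"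
    proof
      fix k assume "k \<in> K"
      have "k0 \<in> K" "k0 \<le> k" using \<open>finite K\<close> \<open>K \<noteq> {}\<close> \<open>k \<in> K\<close> by (auto simp: k0_def)
      have "n \<le> tri m" using assms sq_le_two_tri[of m] by linarith
      have "\<not> k0 + m \<le> k"
      proof
        assume "k0 + m \<le> k"
        then have "tri k0 + tri m \<le> tri k" using tri_add[of k0 m] tri_mono by fastforce
        then show False using \<open>n \<le> tri m\<close> \<open>k \<in> K\<close> \<open>k0 \<in> K\<close> by (auto simp: K_def)
      qed
      then show "k \<in> {k0..<k0 + m}" using \<open>k0 \<le> k\<close> by simp
    qed
    then have "card K \<le> m" using card_mono[of "{k0..<k0 + m}" K] by simp
    then show ?thesis using \<open>range tri \<inter> {j..<j + n} = tri ` K\<close> card_image_le[OF \<open>finite K\<close>, of tri]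
      by simp
  qed (simp add: \<open>range tri \<inter> {j..<j + n} = tri ` K\<close>)
qed

lemma tri_gap_beyond:
  assumes "tri n \<le> tri k" "k < k'"
  shows "tri k + n < tri k'"
proof -
  have "n \<le> k" using assms(1) tri_strict_mono[of k n] by linarith
  then show ?thesis using tri_strict_mono[OF assms(2)] by linarith
qed

lemma card_tri_window_beyond_le_1:
  assumes "tri n \<le> j"
  shows "card (range tri \<inter> {j..<j + n}) \<le> 1"
proof -
  have "p = p'" if p: "p \<in> range tri \<inter> {j..<j + n}" "p' \<in> range tri \<inter> {j..<j + n}" for p p'
  proof -
    obtain k k' where "p = tri k" "p' = tri k'" using p by blast
    have "\<not> k < k'" "\<not> k' < k"
      using tri_gap_beyond[of n k k'] tri_gap_beyond[of n k' k] p assms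
      unfolding \<open>p = tri k\<close> \<open>p' = tri k'\<close> by auto
    then show ?thesis using \<open>p = tri k\<close> \<open>p' = tri k'\<close> by simp
  qed
  then show ?thesis using card_le_Suc0_iff_eq[of "range tri \<inter> {j..<j + n}"] by simp
qed

definition supported_seqs :: "nat set \<Rightarrow> nat \<Rightarrow> (nat \<Rightarrow> nat) set" where
  "supported_seqs P b = {t. \<forall>p. t p < b \<and> (p \<notin> P \<longrightarrow> t p = 0)}"

definition window :: "(nat \<Rightarrow> nat) \<Rightarrow> nat \<Rightarrow> nat \<Rightarrow> nat list" where
  "window t j n = map (\<lambda>i. t (j + i)) [0..<n]"

definition one_letter_words :: "nat \<Rightarrow> nat \<Rightarrow> nat list set" where
  "one_letter_words n b =
     insert (replicate n 0) ((\<lambda>(i, v). (replicate n 0)[i := v]) ` ({..<n} \<times> {..<b}))"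

lemma prefix_seq_shift_pow: "prefix_seq ((shift ^^ j) t) n = window t j n"
proof -
  have "(shift ^^ j) t = (\<lambda>p. t (j + p))"
    by (induction j arbitrary: t) (auto simp: shift_def)
  then show ?thesis unfolding prefix_seq_def window_def by simp
qed

lemma finite_windows: "finite ((\<lambda>t. window t j n) ` supported_seqs P b)"
proof (rule finite_subset)
  show "(\<lambda>t. window t j n) ` supported_seqs P b \<subseteq> {w. set w \<subseteq> {..<b} \<and> length w = n}"
    by (auto simp: window_def supported_seqs_def)
qed (simp add: finite_lists_length_eq)

lemma card_windows_le:
  "card ((\<lambda>t. window t j n) ` supported_seqs P b) \<le> b ^ card (P \<inter> {j..<j + n})"
proof -
  let ?Q = "P \<inter> {j..<j + n}"
  let ?fill = "\<lambda>g. map (\<lambda>i. if j + i \<in> ?Q then g (j + i) else 0) [0..<n]"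
  have "window t j n = ?fill (restrict t ?Q)" if "t \<in> supported_seqs P b" for t
    using that by (auto simp: window_def supported_seqs_def)
  moreover have "restrict t ?Q \<in> PiE ?Q (\<lambda>_. {..<b})" if "t \<in> supported_seqs P b" for t
    using that by (auto simp: supported_seqs_def)
  ultimately have "(\<lambda>t. window t j n) ` supported_seqs P b \<subseteq> ?fill ` PiE ?Q (\<lambda>_. {..<b})"
    by blast
  then have "card ((\<lambda>t. window t j n) ` supported_seqs P b) \<le> card (?fill ` PiE ?Q (\<lambda>_. {..<b}))"
    by (intro card_mono finite_imageI finite_PiE) auto
  also have "\<dots> \<le> card (PiE ?Q (\<lambda>_. {..<b}))"
    by (intro card_image_le finite_PiE) auto
  finally show ?thesis by (simp add: card_PiE)
qed

lemma window_in_one_letter_words: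
  assumes "t \<in> supported_seqs P b" and "card (P \<inter> {j..<j + n}) \<le> 1"
  shows "window t j n \<in> one_letter_words n b"
proof (cases "P \<inter> {j..<j + n} = {}")
  case True
  then have "window t j n = replicate n 0"
    using assms(1) by (intro nth_equalityI) (auto simp: window_def supported_seqs_def disjoint_iff)
  then show ?thesis unfolding one_letter_words_def by simp
next
  case False
  then obtain p where p: "P \<inter> {j..<j + n} = {p}"
    using assms(2) card_le_Suc0_iff_eq[of "P \<inter> {j..<j + n}"] by auto
  then have "p \<in> {j..<j + n}" by blast
  then have "j \<le> p" "p - j < n" by auto
  have "t (j + i) = (replicate n 0)[p - j := t p] ! i" if "i < n" for i
  proof (cases "i = p - j")
    case True
    then show ?thesis using \<open>j \<le> p\<close> that by simp
  next
    case False
    have "j + i \<in> {j..<j + n}" "j + i \<noteq> p" using that False by auto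
    then have "j + i \<notin> P" using p by blast
    then have "t (j + i) = 0" using assms(1) by (simp add: supported_seqs_def)
    then show ?thesis using False that by simp
  qed
  then have "window t j n = (replicate n 0)[p - j := t p]"
    by (intro nth_equalityI) (auto simp: window_def)
  then show ?thesis
    using assms(1) \<open>p - j < n\<close> unfolding one_letter_words_def supported_seqs_def by force
qed

lemma finite_one_letter_words: "finite (one_letter_words n b)"
  by (simp add: one_letter_words_def)

lemma card_one_letter_words: "card (one_letter_words n b) \<le> b * n + 1"
proof -
  have "card ((\<lambda>(i, v). (replicate n 0)[i := v]) ` ({..<n} \<times> {..<b})) \<le> n * b"
    using card_image_le[of "{..<n} \<times> {..<b}"] by (simp add: card_cartesian_product)
  then show ?thesis by (simp add: one_letter_words_def card_insert_if mult.commute)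
qed

lemma T13_level_letters_less_3: "w \<in> T13_level m \<Longrightarrow> x \<in> set w \<Longrightarrow> x < 3"
proof (induction m arbitrary: w)
  case (Suc m)
  show ?case
  proof (cases "m = 0")
    case False
    then obtain v j where w: "w = v @ [j]" "v \<in> T13_level m" "j < nchildren13 m (T13_level m) v"
      using Suc.prems(1) by auto
    have "j < 3" using w(3) unfolding nchildren13_def by (auto split: if_splits)
    then show ?thesis using Suc.IH[OF w(2)] Suc.prems(2) w(1) by auto
  qed (use Suc.prems in auto)
qed simp

lemma R13_less_3: "a \<in> R13 \<Longrightarrow> a k < 3"
proof -
  assume "a \<in> R13"
  then obtain m where "prefix_seq a (Suc k) \<in> T13_level m"
    unfolding R13_def T13_vertices_def by blast
  moreover have "a k \<in> set (prefix_seq a (Suc k))" unfolding prefix_seq_def by auto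
  ultimately show ?thesis using T13_level_letters_less_3 by blast
qed

lemma E0_subset_supported_seqs: "E0 \<subseteq> supported_seqs (range tri) 3"
proof
  fix t assume "t \<in> E0"
  then obtain a where a: "a \<in> R13" "\<forall>k. t (tri k) = a k" and zero: "\<forall>p. p \<notin> range tri \<longrightarrow> t p = 0"
    unfolding E0_def tri_def by blast
  have "t p < 3" for p
  proof (cases "p \<in> range tri")
    case True
    then obtain k where "p = tri k" by blast
    then show ?thesis using a R13_less_3 by simp
  qed (simp add: zero)
  then show "t \<in> supported_seqs (range tri) 3" using zero by (simp add: supported_seqs_def)
qed

lemma Etilde_words_subset:
  "(\<lambda>s. prefix_seq s n) ` Etilde \<subseteq>
     (\<Union>j<tri n. (\<lambda>t. window t j n) ` supported_seqs (range tri) 3) \<union> one_letter_words n 3"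
proof
  fix w assume "w \<in> (\<lambda>s. prefix_seq s n) ` Etilde"
  then obtain j t where "t \<in> E0" and w: "w = window t j n"
    unfolding Etilde_def Ej_def prefix_seq_shift_pow[symmetric] by blast
  then have t: "t \<in> supported_seqs (range tri) 3" using E0_subset_supported_seqs by blast
  show "w \<in> (\<Union>j<tri n. (\<lambda>t. window t j n) ` supported_seqs (range tri) 3) \<union> one_letter_words n 3"
  proof (cases "j < tri n")
    case False
    then have "w \<in> one_letter_words n 3"
      using w window_in_one_letter_words[OF t card_tri_window_beyond_le_1] by simp
    then show ?thesis by blast
  qed (use t w in blast)
qed

lemma finite_Etilde_words: "finite ((\<lambda>s. prefix_seq s n) ` Etilde)"
  by (rule finite_subset[OF Etilde_words_subset])
    (simp add: finite_windows finite_one_letter_words)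

lemma card_Etilde_words_le:
  assumes "2 * n \<le> m * m"
  shows "card ((\<lambda>s. prefix_seq s n) ` Etilde) \<le> tri n * 3 ^ m + (3 * n + 1)"
proof -
  let ?U = "\<Union>j<tri n. (\<lambda>t. window t j n) ` supported_seqs (range tri) 3"
  have "card ?U \<le> (\<Sum>j<tri n. card ((\<lambda>t. window t j n) ` supported_seqs (range tri) 3))"
    by (rule card_UN_le) simp
  also have "\<dots> \<le> (\<Sum>j<tri n. 3 ^ m)"
  proof (rule sum_mono)
    fix j
    have "card ((\<lambda>t. window t j n) ` supported_seqs (range tri) 3) \<le> 3 ^ card (range tri \<inter> {j..<j + n})"
      by (rule card_windows_le)
    also have "\<dots> \<le> 3 ^ m" by (rule power_increasing[OF card_tri_window_le[OF assms]]) simp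
    finally show "card ((\<lambda>t. window t j n) ` supported_seqs (range tri) 3) \<le> 3 ^ m" .
  qed
  finally have "card ?U \<le> tri n * 3 ^ m" by simp
  have "card ((\<lambda>s. prefix_seq s n) ` Etilde) \<le> card (?U \<union> one_letter_words n 3)"
    by (intro card_mono Etilde_words_subset)
      (simp add: finite_windows finite_one_letter_words)
  also have "\<dots> \<le> card ?U + card (one_letter_words n 3)" by (rule card_Un_le)
  finally show ?thesis using \<open>card ?U \<le> tri n * 3 ^ m\<close> card_one_letter_words[of n 3] by linarith
qed

lemma card_Phi_level_edges_le:
  assumes "finite ((\<lambda>s. prefix_seq s n) ` E)"
  shows "card (Phi_level_edges E n) \<le> card ((\<lambda>s. prefix_seq s n) ` E)"
proof -
  have "Phi_level_edges E n \<subseteq> (\<lambda>w. (butlast w, w)) ` (\<lambda>s. prefix_seq s n) ` E"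
  proof
    fix e assume "e \<in> Phi_level_edges E n"
    then obtain v j where e: "e = (v, v @ [j])" "v @ [j] \<in> Phi_vertices E" "length (v @ [j]) = n"
      unfolding Phi_level_edges_def Phi_edges_def by auto
    then obtain s n' where "v @ [j] = prefix_seq s n'" "s \<in> E" unfolding Phi_vertices_def by auto
    then have "v @ [j] = prefix_seq s n" using e(3) by (simp add: prefix_seq_def)
    moreover have "e = (butlast (v @ [j]), v @ [j])" using e(1) by simp
    ultimately show "e \<in> (\<lambda>w. (butlast w, w)) ` (\<lambda>s. prefix_seq s n) ` E"
      using \<open>s \<in> E\<close> by blast
  qed
  then have "card (Phi_level_edges E n) \<le> card ((\<lambda>w. (butlast w, w)) ` (\<lambda>s. prefix_seq s n) ` E)"
    using assms by (intro card_mono) auto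
  also have "\<dots> \<le> card ((\<lambda>s. prefix_seq s n) ` E)" using assms by (rule card_image_le)
  finally show ?thesis .
qed

lemma polynomial_times_exponential_le:
  assumes "1 \<le> n" "n \<le> r * r"
  shows "tri n * 3 ^ (2 * r) + (3 * n + 1) \<le> (3::nat) ^ (8 * r)"
proof -
  have "1 \<le> r" using assms by (cases r) auto
  have "r < 3 ^ r" by (rule power_gt_expt) simp
  then have "r * r < 3 ^ r * 3 ^ r" by (intro mult_strict_mono) simp_all
  then have "n \<le> 3 ^ r * 3 ^ r" using assms(2) by linarith
  also have "\<dots> = 3 ^ (2 * r)" by (simp add: mult_2 power_add)
  finally have n: "n \<le> 3 ^ (2 * r)" .
  have "tri n \<le> n * n" by (rule tri_le_sq)
  also have "\<dots> \<le> 3 ^ (2 * r) * 3 ^ (2 * r)" by (intro mult_mono n) simp_all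
  finally have "tri n \<le> 3 ^ (4 * r)" by (simp add: power_add[symmetric])
  then have "tri n * 3 ^ (2 * r) \<le> 3 ^ (4 * r) * 3 ^ (2 * r)" by (rule mult_right_mono) simp
  also have "\<dots> = 3 ^ (6 * r)" by (simp flip: power_add)
  finally have "tri n * 3 ^ (2 * r) \<le> 3 ^ (6 * r)" .
  moreover have "3 * n + 1 \<le> 3 ^ (6 * r)"
  proof -
    have "3 * n + 1 \<le> 3 ^ 2 * n" using assms(1) by simp
    also have "\<dots> \<le> 3 ^ (4 * r) * 3 ^ (2 * r)" using \<open>1 \<le> r\<close> n by (intro mult_mono power_increasing) simp_all
    finally show ?thesis by (simp add: power_add[symmetric])
  qed
  moreover have "2 * 3 ^ (6 * r) \<le> 3 ^ (2 * r) * (3::nat) ^ (6 * r)"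
    using \<open>1 \<le> r\<close> power_increasing[of 2 "2 * r" "3::nat"] by simp
  moreover have "3 ^ (2 * r) * (3::nat) ^ (6 * r) = 3 ^ (8 * r)" by (simp flip: power_add)
  ultimately show ?thesis by linarith
qed

theorem mainTheorem3:
  shows "\<exists>C::real. C > 0 \<and>
           (\<forall>n::nat. n \<ge> 1 \<longrightarrow>
              real (card (Phi_level_edges Etilde n)) \<le> 3 powr (C * sqrt (real n)))"
proof (intro exI[of _ 16] conjI allI impI)
  fix n :: nat assume "1 \<le> n"
  define r where "r = nat \<lceil>sqrt (real n)\<rceil>"
  have "1 \<le> sqrt (real n)" using \<open>1 \<le> n\<close> by simp
  have "sqrt (real n) \<le> real r" unfolding r_def by (rule real_nat_ceiling_ge)
  then have "real n \<le> real r * real r"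
    using mult_mono[of "sqrt (real n)" "real r" "sqrt (real n)" "real r"] by simp
  then have "n \<le> r * r" "2 * n \<le> (2 * r) * (2 * r)" by (simp_all flip: of_nat_mult)
  have r: "real r \<le> 2 * sqrt (real n)"
    unfolding r_def using \<open>1 \<le> sqrt (real n)\<close> by linarith
  have "card (Phi_level_edges Etilde n) \<le> card ((\<lambda>s. prefix_seq s n) ` Etilde)"
    by (rule card_Phi_level_edges_le[OF finite_Etilde_words])
  also have "\<dots> \<le> tri n * 3 ^ (2 * r) + (3 * n + 1)"
    by (rule card_Etilde_words_le) fact
  also have "\<dots> \<le> 3 ^ (8 * r)"
    by (rule polynomial_times_exponential_le) fact+
  finally have "real (card (Phi_level_edges Etilde n)) \<le> real (3 ^ (8 * r))"
    by (rule of_nat_mono)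
  also have "\<dots> = 3 powr real (8 * r)" by (simp only: of_nat_power powr_realpow) simp
  also have "\<dots> \<le> 3 powr (16 * sqrt (real n))"
    using r by (intro powr_mono) auto
  finally show "real (card (Phi_level_edges Etilde n)) \<le> 3 powr (16 * sqrt (real n))" .
qed simp

end
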